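(* Let $a$ and $q \geq 1$ be integers with $\gcd(a,q) = 1$. Let $n, k, L$ be positive integers and $N \geq 1$ a real number such that $$L \leq N^n, \qquad q \leq L N^k, \qquad 2^{n+k+1} < N.$$ Let $\mathcal{P}$ be the set of primes in $[N/2, N]$ not dividing $q$. Let $m \leq n$ be a positive integer and let $r_1, \dots, r_m$ be positive integers with $r_1 + \cdots + r_m = n$. Then $$\sum_{l = 1}^{L} \left| \sum_{q_1 \in \mathcal{P}} \cdots \sum_{q_m \in \mathcal{P}} e\!\left(\frac{l\, q_1^{r_1} \cdots q_m^{r_m}\, a}{q}\right) \right| \leq C\, 2^{n+k} n^n \max\!\left(L N^{n/2 + k/2},\ \frac{L N^n}{q^{1/2}}\right),$$ where $C>0$ is an absolute constant.
   Context: $e(x) := e^{2\pi i x}$. *)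

theory Defs
  imports "HOL-Analysis.Analysis"
begin

definition e :: "real \<Rightarrow> complex" where
  "e x = exp (2 * of_real pi * \<i> * of_real x)"

end

theory Submission
  imports Defs "HOL-Computational_Algebra.Primes"
begin

(* Write the sum over tuples (q_1,...,q_m) of primes in [N/2, N] as a double sum over
   X = tuples of the first j coordinates and Y = tuples of the remaining ones, so that the
   phase is l * x(t) * y(u) * a / q.  Cauchy-Schwarz over the pairs (l,u) and regrouping
   by the value h = l * y(u) bound the square of the l-sum by
     (number of pairs (l,u)) * (max multiplicity of h) * sum_h |sum_t e(h x(t) a / q)|^2,
   and completing the h-sum to full periods modulo q turns the last factor into
   (H + q) * #{(t,t') : x(t) = x(t') mod q}.  Unique factorisation bounds the
   multiplicities: a product of prime powers determines its j primes up to j^j choices,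
   and an integer h <= N^(2n) has at most 4n prime divisors >= N/2.  The split index j
   is chosen so that the resulting powers of N balance; an elementary estimate and a
   square root then give the theorem with C = 2. *)

lemma e_add: "e (x + y) = e x * e y"
  unfolding e_def by (simp add: distrib_left exp_add)

lemma e_cnj: "cnj (e x) = e (- x)"
  unfolding e_def by (simp add: exp_cnj)

lemma e_power: "e (real h * x) = e x ^ h"
proof -
  have "2 * of_real pi * \<i> * of_real (real h * x) = of_nat h * (2 * of_real pi * \<i> * of_real x)" by simp
  then show ?thesis unfolding e_def by (simp only: exp_of_nat_mult)
qed

lemma e_of_int: "e (of_int z) = 1"
  unfolding e_def exp_eq_1 by (auto intro!: exI[of _ z])

lemma e_eq_1_imp_Ints: "e x = 1 \<Longrightarrow> x \<in> \<int>"
proof -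
  assume "e x = 1"
  then obtain n::int where "2 * pi * x = of_int (2*n) * pi" unfolding e_def exp_eq_1 by auto
  then have "x = of_int n" by simp
  then show ?thesis by simp
qed

lemma root_of_unity_sum_periods:
  fixes w :: "'a::field"
  assumes w1: "w \<noteq> 1" and wq: "w ^ q = 1"
  shows "(\<Sum>h=1..K * q. w ^ h) = 0"
proof -
  have "(\<Sum>h=1..K * q. w ^ h) = (\<Sum>h<K * q. w ^ Suc h)"
    by (rule sum.reindex_bij_witness[of _ Suc "\<lambda>h. h - 1"]) auto
  also have "\<dots> = w * (\<Sum>h<K * q. w ^ h)" by (simp add: sum_distrib_left)
  also have "(\<Sum>h<K * q. w ^ h) = 0"
    using w1 by (simp add: geometric_sum power_mult wq mult.commute[of K])
  finally show ?thesis by simp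
qed

text \<open>Orthogonality: a sum of e(h z / q) over K full periods h = 1 .. K q is K q if q
  divides z and vanishes otherwise, since then e(z / q) is a nontrivial q-th root of unity.\<close>
lemma e_sum_full_periods:
  fixes z q :: int and K :: nat
  assumes q: "q \<ge> 1"
  shows "(\<Sum>h=1..K * nat q. e (real h * real_of_int z / real_of_int q))
       = (if q dvd z then of_nat (K * nat q) else 0)"
proof (cases "q dvd z")
  case True
  then obtain w where w: "z = q * w" by auto
  have "e (real h * real_of_int z / real_of_int q) = 1" for h :: nat
  proof -
    have "real h * real_of_int z / real_of_int q = of_int (int h * w)" using q by (simp add: w)
    then show ?thesis by (metis e_of_int)
  qed
  then show ?thesis using True by simp
next
  case False
  define w where "w = e (real_of_int z / real_of_int q)"
  have "w \<noteq> 1"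
  proof
    assume "w = 1"
    then have "real_of_int z / real_of_int q \<in> \<int>" unfolding w_def by (rule e_eq_1_imp_Ints)
    then obtain c where "real_of_int z / real_of_int q = of_int c" by (auto elim: Ints_cases)
    then have "real_of_int z = real_of_int (q * c)" using q by (simp add: field_simps)
    then have "z = q * c" by linarith
    then show False using False by auto
  qed
  moreover have "w ^ nat q = 1"
  proof -
    have "w ^ nat q = e (real (nat q) * (real_of_int z / real_of_int q))" unfolding w_def by (simp only: e_power)
    also have "real (nat q) * (real_of_int z / real_of_int q) = of_int z" using q by simp
    finally show ?thesis by (simp add: e_of_int)
  qed
  moreover have "(\<Sum>h=1..K * nat q. e (real h * real_of_int z / real_of_int q)) = (\<Sum>h=1..K * nat q. w ^ h)"
    unfolding w_def by (intro sum.cong refl) (simp add: e_power[symmetric] times_divide_eq_right)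
  ultimately show ?thesis using False root_of_unity_sum_periods by simp
qed

lemma norm_exp_sum_squared:
  fixes X :: "'a set" and \<phi> :: "'a \<Rightarrow> real"
  shows "complex_of_real ((norm (\<Sum>t\<in>X. e (\<phi> t)))^2) = (\<Sum>p\<in>X\<times>X. e (\<phi> (fst p) - \<phi> (snd p)))"
proof -
  have "complex_of_real ((norm (\<Sum>t\<in>X. e (\<phi> t)))^2) = (\<Sum>t\<in>X. e (\<phi> t)) * cnj (\<Sum>t\<in>X. e (\<phi> t))"
    by (rule complex_norm_square)
  also have "\<dots> = (\<Sum>t\<in>X. \<Sum>t'\<in>X. e (\<phi> t) * cnj (e (\<phi> t')))"
    by (simp add: sum_distrib_left sum_distrib_right cnj_sum) (rule sum.swap)
  also have "\<dots> = (\<Sum>p\<in>X\<times>X. e (\<phi> (fst p) - \<phi> (snd p)))"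
    by (simp add: sum.cartesian_product split_def e_cnj e_add[symmetric])
  finally show ?thesis .
qed

text \<open>Mean square over K full periods: by orthogonality only the pairs of frequencies that
  are congruent modulo q contribute, each with weight K q (a is invertible modulo q).\<close>
lemma exp_sum_square_full_periods:
  fixes X :: "'a set" and x :: "'a \<Rightarrow> int" and a q :: int and K :: nat
  assumes fin: "finite X" and q: "q \<ge> 1" and cop: "coprime a q"
  shows "(\<Sum>h=1..K * nat q. (norm (\<Sum>t\<in>X. e (real h * real_of_int (x t) * real_of_int a / real_of_int q)))^2)
     = real (K * nat q) * real (card {p \<in> X \<times> X. q dvd x (fst p) - x (snd p)})"
proof -
  define d where "d p = x (fst p) - x (snd p)" for p :: "'a \<times> 'a"
  have "complex_of_real (\<Sum>h=1..K * nat q. (norm (\<Sum>t\<in>X. e (real h * real_of_int (x t) * real_of_int a / real_of_int q)))^2)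
      = (\<Sum>h=1..K * nat q. \<Sum>p\<in>X\<times>X. e (real h * real_of_int (d p * a) / real_of_int q))"
    unfolding of_real_sum norm_exp_sum_squared d_def
    by (intro sum.cong refl arg_cong[where f = e]) (simp add: algebra_simps diff_divide_distrib)
  also have "\<dots> = (\<Sum>p\<in>X\<times>X. \<Sum>h=1..K * nat q. e (real h * real_of_int (d p * a) / real_of_int q))"
    by (rule sum.swap)
  also have "\<dots> = (\<Sum>p\<in>X\<times>X. if q dvd d p * a then of_nat (K * nat q) else 0)"
    by (intro sum.cong refl e_sum_full_periods q)
  also have "\<dots> = (\<Sum>p\<in>X\<times>X. if q dvd d p then of_nat (K * nat q) else 0)"
  proof -
    have "q dvd d p * a \<longleftrightarrow> q dvd d p" for p
      using cop by (metis coprime_commute coprime_dvd_mult_left_iff)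
    then show ?thesis by simp
  qed
  also have "\<dots> = of_nat (K * nat q) * of_nat (card {p \<in> X \<times> X. q dvd d p})"
    using fin by (subst sum.inter_filter[symmetric]) auto
  also have "\<dots> = complex_of_real (real (K * nat q) * real (card {p \<in> X \<times> X. q dvd d p}))"
    by simp
  finally show ?thesis unfolding d_def of_real_eq_iff .
qed

text \<open>Completion: extending the range of h up to a multiple K q \<le> H + q of the period, the
  mean square of an exponential sum is controlled by the number of congruent pairs.\<close>
lemma exp_sum_square_completion:
  fixes X :: "'a set" and x :: "'a \<Rightarrow> int" and a q :: int and H :: nat
  assumes fin: "finite X" and q: "q \<ge> 1" and cop: "coprime a q"
  shows "(\<Sum>h=1..H. (norm (\<Sum>t\<in>X. e (real h * real_of_int (x t) * real_of_int a / real_of_int q)))^2)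
     \<le> (real H + real_of_int q) * real (card {p \<in> X \<times> X. q dvd x (fst p) - x (snd p)})"
proof -
  define K where "K = H div nat q + 1"
  have H_le: "H \<le> K * nat q"
  proof -
    have "H mod nat q < nat q" using q by simp
    then show ?thesis unfolding K_def distrib_right using div_mult_mod_eq[of H "nat q"] by linarith
  qed
  have Kq_le: "real (K * nat q) \<le> real H + real_of_int q"
  proof -
    have "K * nat q \<le> H + nat q" unfolding K_def using div_times_less_eq_dividend[of H "nat q"] by simp
    then show ?thesis using q by linarith
  qed
  have "(\<Sum>h=1..H. (norm (\<Sum>t\<in>X. e (real h * real_of_int (x t) * real_of_int a / real_of_int q)))^2)
      \<le> (\<Sum>h=1..K * nat q. (norm (\<Sum>t\<in>X. e (real h * real_of_int (x t) * real_of_int a / real_of_int q)))^2)"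
    by (rule sum_mono2) (use H_le in auto)
  also have "\<dots> \<le> (real H + real_of_int q) * real (card {p \<in> X \<times> X. q dvd x (fst p) - x (snd p)})"
    unfolding exp_sum_square_full_periods[OF fin q cop] by (rule mult_right_mono[OF Kq_le]) simp
  finally show ?thesis .
qed

text \<open>An interval [0, B] contains at most B/q + 1 integers of a given residue class modulo q:
  distinct members have distinct quotients on division by q.\<close>
lemma card_residue_class_le:
  fixes q :: int and c B :: nat
  assumes q: "q \<ge> 1"
  shows "real (card {v \<in> {0..B}. q dvd int c - int v}) \<le> real B / real_of_int q + 1"
proof -
  let ?V = "{v \<in> {0..B}. q dvd int c - int v}"
  have inj: "inj_on (\<lambda>v. v div nat q) ?V"
  proof (rule inj_onI)
    fix v w assume v: "v \<in> ?V" and w: "w \<in> ?V" and eq: "v div nat q = w div nat q"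
    have "q dvd (int c - int w) - (int c - int v)" by (rule dvd_diff) (use v w in auto)
    then have "int v mod q = int w mod q" by (simp add: mod_eq_dvd_iff)
    then have "int (v mod nat q) = int (w mod nat q)" using q by (simp add: of_nat_mod)
    then have "v mod nat q = w mod nat q" by simp
    then show "v = w" using eq by (metis div_mult_mod_eq)
  qed
  have "(\<lambda>v. v div nat q) ` ?V \<subseteq> {0..B div nat q}" by (auto intro: div_le_mono)
  then have "card ((\<lambda>v. v div nat q) ` ?V) \<le> card {0..B div nat q}"
    by (rule card_mono[rotated]) simp
  then have "card ?V \<le> B div nat q + 1" using card_image[OF inj] by simp
  moreover have "real (B div nat q) \<le> real B / real_of_int q"
  proof -
    have "real (B div nat q) = of_int \<lfloor>real B / real (nat q)\<rfloor>"
      by (metis floor_divide_of_nat_eq of_int_of_nat_eq)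
    also have "\<dots> \<le> real B / real (nat q)" by (rule of_int_floor_le)
    finally show ?thesis using q by simp
  qed
  ultimately show ?thesis by linarith
qed

lemma card_congruent_pairs_le:
  fixes X :: "'a set" and x :: "'a \<Rightarrow> nat" and q :: int and B \<mu> :: nat
  assumes fin: "finite X" and q: "q \<ge> 1" and xB: "\<forall>t\<in>X. x t \<le> B"
    and fib: "\<forall>v. card {t\<in>X. x t = v} \<le> \<mu>"
  shows "real (card {p \<in> X \<times> X. q dvd int (x (fst p)) - int (x (snd p))})
          \<le> real (card X) * real \<mu> * (real B / real_of_int q + 1)"
proof -
  define R where "R t = {t'\<in>X. q dvd int (x t) - int (x t')}" for t
  have pairs: "{p \<in> X \<times> X. q dvd int (x (fst p)) - int (x (snd p))} = Sigma X R"
    unfolding R_def by auto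
  have card_R: "real (card (R t)) \<le> real \<mu> * (real B / real_of_int q + 1)" for t
  proof -
    let ?V = "{v \<in> {0..B}. q dvd int (x t) - int v}"
    have "R t \<subseteq> (\<Union>v\<in>?V. {t'\<in>X. x t' = v})" unfolding R_def using xB by auto
    then have "card (R t) \<le> card (\<Union>v\<in>?V. {t'\<in>X. x t' = v})"
      by (rule card_mono[rotated]) (use fin in auto)
    also have "\<dots> \<le> (\<Sum>v\<in>?V. card {t'\<in>X. x t' = v})" by (rule card_UN_le) simp
    also have "\<dots> \<le> card ?V * \<mu>" using fib sum_mono[of ?V _ "\<lambda>_. \<mu>"] by simp
    finally have "real (card (R t)) \<le> real (card ?V) * real \<mu>" by (metis of_nat_le_iff of_nat_mult)
    also have "\<dots> \<le> (real B / real_of_int q + 1) * real \<mu>"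
      by (rule mult_right_mono[OF card_residue_class_le[OF q]]) simp
    finally show ?thesis by (simp add: mult.commute)
  qed
  have "real (card (Sigma X R)) = (\<Sum>t\<in>X. real (card (R t)))"
    using fin by (subst card_SigmaI) (auto simp: R_def)
  also have "\<dots> \<le> (\<Sum>t\<in>X. real \<mu> * (real B / real_of_int q + 1))" by (rule sum_mono) (rule card_R)
  also have "\<dots> = real (card X) * real \<mu> * (real B / real_of_int q + 1)" by simp
  finally show ?thesis unfolding pairs .
qed

lemma sum_by_values_le:
  fixes S :: "'a set" and A :: "'b set" and f :: "'a \<Rightarrow> 'b" and W :: "'b \<Rightarrow> real" and \<rho> :: nat
  assumes finS: "finite S" and finA: "finite A" and range: "f ` S \<subseteq> A"
    and fibres: "\<forall>h. card {p\<in>S. f p = h} \<le> \<rho>" and W: "\<forall>h\<in>A. 0 \<le> W h"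
  shows "(\<Sum>p\<in>S. W (f p)) \<le> real \<rho> * (\<Sum>h\<in>A. W h)"
proof -
  have "(\<Sum>p\<in>S. W (f p)) = (\<Sum>h\<in>f ` S. \<Sum>p\<in>{p\<in>S. f p = h}. W (f p))"
    by (rule sum.image_gen[OF finS])
  also have "\<dots> = (\<Sum>h\<in>f ` S. real (card {p\<in>S. f p = h}) * W h)"
    by (intro sum.cong refl) simp
  also have "\<dots> \<le> (\<Sum>h\<in>f ` S. real \<rho> * W h)"
    using fibres W range by (intro sum_mono mult_right_mono) auto
  also have "\<dots> \<le> (\<Sum>h\<in>A. real \<rho> * W h)"
    using finA range W by (intro sum_mono2) auto
  finally show ?thesis by (simp add: sum_distrib_left)
qed

text \<open>Bilinear estimate for phases l x(t) y(u) a / q: the triangle inequality in t, then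
  Cauchy-Schwarz over the pairs (l, u), regrouping by h = l y(u) (each value taken at most
  rho times), completion in h and counting congruent pairs of x-values.\<close>
lemma bilinear_exp_sum_bound:
  fixes X :: "'a set" and Y :: "'b set" and x :: "'a \<Rightarrow> nat" and y :: "'b \<Rightarrow> nat"
    and a q :: int and L Bx By \<mu> \<rho> :: nat
  assumes finX: "finite X" and finY: "finite Y" and q: "q \<ge> 1" and cop: "coprime a q"
    and xB: "\<forall>t\<in>X. x t \<le> Bx" and yB: "\<forall>u\<in>Y. 1 \<le> y u \<and> y u \<le> By"
    and fibx: "\<forall>v. card {t\<in>X. x t = v} \<le> \<mu>"
    and fiby: "\<forall>h. card {p \<in> {1..L} \<times> Y. fst p * y (snd p) = h} \<le> \<rho>"
  shows "(\<Sum>l=1..L. norm (\<Sum>p\<in>X\<times>Y. e (real l * real (x (fst p) * y (snd p)) * real_of_int a / real_of_int q)))^2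
     \<le> real L * real (card Y) * real \<rho> * (real (L * By) + real_of_int q)
         * (real (card X) * real \<mu> * (real Bx / real_of_int q + 1))"
proof -
  define G where "G h = norm (\<Sum>t\<in>X. e (real h * real_of_int (int (x t)) * real_of_int a / real_of_int q))" for h :: nat
  define S where "S = {1..L} \<times> Y"
  define f where "f p = fst p * y (snd p)" for p :: "nat \<times> 'b"
  define bound where "bound = (real (L * By) + real_of_int q) * (real (card X) * real \<mu> * (real Bx / real_of_int q + 1))"
  have finS: "finite S" unfolding S_def using finY by simp
  have inner: "norm (\<Sum>p\<in>X\<times>Y. e (real l * real (x (fst p) * y (snd p)) * real_of_int a / real_of_int q))
      \<le> (\<Sum>u\<in>Y. G (l * y u))" for l
  proof -
    have "(\<Sum>p\<in>X\<times>Y. e (real l * real (x (fst p) * y (snd p)) * real_of_int a / real_of_int q))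
        = (\<Sum>t\<in>X. \<Sum>u\<in>Y. e (real l * real (x t * y u) * real_of_int a / real_of_int q))"
      by (simp add: sum.cartesian_product split_def)
    also have "\<dots> = (\<Sum>u\<in>Y. \<Sum>t\<in>X. e (real (l * y u) * real_of_int (int (x t)) * real_of_int a / real_of_int q))"
      by (subst sum.swap) (intro sum.cong refl, simp add: mult_ac)
    finally show ?thesis unfolding G_def by (simp only: norm_sum)
  qed
  have sum_le: "(\<Sum>l=1..L. norm (\<Sum>p\<in>X\<times>Y. e (real l * real (x (fst p) * y (snd p)) * real_of_int a / real_of_int q)))
      \<le> (\<Sum>p\<in>S. G (f p))"
  proof -
    have "(\<Sum>l=1..L. norm (\<Sum>p\<in>X\<times>Y. e (real l * real (x (fst p) * y (snd p)) * real_of_int a / real_of_int q)))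
        \<le> (\<Sum>l=1..L. \<Sum>u\<in>Y. G (l * y u))" by (rule sum_mono) (rule inner)
    also have "\<dots> = (\<Sum>p\<in>S. G (f p))"
      unfolding S_def f_def by (simp add: sum.cartesian_product split_def)
    finally show ?thesis .
  qed
  have range: "f ` S \<subseteq> {1..L * By}"
  proof
    fix h assume "h \<in> f ` S"
    then obtain l u where l: "1 \<le> l" "l \<le> L" and u: "u \<in> Y" and h: "h = l * y u"
      unfolding S_def f_def by auto
    then show "h \<in> {1..L * By}" using yB by (auto intro: mult_le_mono)
  qed
  have squares_le: "(\<Sum>p\<in>S. (G (f p))^2) \<le> real \<rho> * bound"
  proof -
    have "(\<Sum>p\<in>S. (G (f p))^2) \<le> real \<rho> * (\<Sum>h=1..L * By. (G h)^2)"
      using sum_by_values_le[OF finS _ range, of \<rho> "\<lambda>h. (G h)^2"] fiby by (simp add: S_def f_def)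
    also have "\<dots> \<le> real \<rho> * ((real (L * By) + real_of_int q)
        * real (card {p \<in> X \<times> X. q dvd int (x (fst p)) - int (x (snd p))}))"
      unfolding G_def by (intro mult_left_mono exp_sum_square_completion finX q cop) simp
    also have "\<dots> \<le> real \<rho> * bound"
      unfolding bound_def using q by (intro mult_left_mono card_congruent_pairs_le finX xB fibx) auto
    finally show ?thesis .
  qed
  have "(\<Sum>l=1..L. norm (\<Sum>p\<in>X\<times>Y. e (real l * real (x (fst p) * y (snd p)) * real_of_int a / real_of_int q)))^2
      \<le> (\<Sum>p\<in>S. G (f p))^2"
    by (rule power_mono[OF sum_le]) (simp add: sum_nonneg)
  also have "\<dots> \<le> (\<Sum>p\<in>S. (G (f p))^2) * real (card S)" by (rule sum_squared_le_sum_of_squares)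
  also have "\<dots> \<le> real \<rho> * bound * real (L * card Y)"
    using squares_le by (simp add: S_def card_cartesian_product mult_right_mono)
  finally show ?thesis unfolding bound_def by (simp add: mult_ac)
qed

lemma dvd_prod_powers:
  fixes t :: "nat \<Rightarrow> nat"
  assumes "finite I" "i \<in> I" "r i > 0"
  shows "t i dvd (\<Prod>k\<in>I. t k ^ r k)"
proof -
  have "t i dvd t i ^ r i" using assms(3) by (simp add: dvd_power)
  also have "t i ^ r i dvd (\<Prod>k\<in>I. t k ^ r k)" using assms by (intro dvd_prodI)
  finally show ?thesis .
qed

lemma prime_dvd_prod_powers:
  fixes t :: "nat \<Rightarrow> nat"
  assumes "finite I" "prime p" "p dvd (\<Prod>k\<in>I. t k ^ r k)" "\<forall>k\<in>I. prime (t k)"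
  shows "\<exists>k\<in>I. p = t k"
proof -
  obtain k where k: "k \<in> I" "p dvd t k ^ r k" using prime_dvd_prod_iff[OF assms(1) assms(2)] assms(3) by auto
  then have "p dvd t k" using assms(2) prime_dvd_power by metis
  moreover have "prime (t k)" using assms(4) k(1) by auto
  ultimately have "p = t k" using primes_dvd_imp_eq assms(2) by metis
  then show ?thesis using k by blast
qed

lemma prod_distinct_primes_dvd:
  fixes h :: nat
  assumes "finite D" "\<forall>p\<in>D. prime p \<and> p dvd h"
  shows "\<Prod>D dvd h"
  using assms
proof (induction D rule: finite_induct)
  case empty then show ?case by simp
next
  case (insert p D)
  have pp: "prime p" "p dvd h" using insert.prems by auto
  have IH: "\<Prod>D dvd h" using insert by auto
  have "\<not> p dvd \<Prod>D"
  proof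
    assume "p dvd \<Prod>D"
    then obtain p' where "p' \<in> D" "p dvd p'" using prime_dvd_prod_iff[OF insert.hyps(1) pp(1), of id] by auto
    moreover have "prime p'" using \<open>p' \<in> D\<close> insert.prems by auto
    ultimately have "p = p'" using primes_dvd_imp_eq pp(1) by metis
    then show False using \<open>p' \<in> D\<close> insert.hyps(2) by simp
  qed
  then have "coprime p (\<Prod>D)" using pp(1) by (simp add: prime_imp_coprime)
  then have "p * \<Prod>D dvd h" using pp(2) IH by (intro divides_mult)
  then show ?case using insert.hyps by simp
qed

text \<open>A positive h \<le> N^(2n) has at most 4n prime divisors \<ge> N/2 once N \<ge> 4,
  since N^(2n) < (N/2)^(4n+1).\<close>
lemma card_large_prime_divisors_le:
  fixes N :: real and h :: nat and D :: "nat set"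
  assumes N: "N \<ge> 4" and fin: "finite D" and D: "\<forall>p\<in>D. prime p \<and> p dvd h \<and> N / 2 \<le> real p"
    and h: "h > 0" "real h \<le> N ^ (2*n)"
  shows "card D \<le> 4 * n"
proof (rule ccontr)
  assume "\<not> card D \<le> 4 * n"
  then have c: "4 * n + 1 \<le> card D" by simp
  have "(N/2) ^ card D = (\<Prod>p\<in>D. N/2)" by simp
  also have "\<dots> \<le> (\<Prod>p\<in>D. real p)" using D N by (intro prod_mono) auto
  also have "\<dots> = real (\<Prod>D)" by simp
  also have "\<dots> \<le> real h"
  proof -
    have "\<Prod>D dvd h" using prod_distinct_primes_dvd[OF fin] D by auto
    then have "\<Prod>D \<le> h" using h(1) by (rule dvd_imp_le)
    then show ?thesis by (simp only: of_nat_le_iff)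
  qed
  finally have A: "(N/2) ^ card D \<le> N ^ (2*n)" using h(2) by linarith
  have "(N/2) ^ (4*n+1) \<le> (N/2) ^ card D" using N c by (intro power_increasing) auto
  moreover have "N ^ (2*n) < (N/2) ^ (4*n+1)"
  proof -
    have "N * 4 \<le> N * N" using N by (intro mult_left_mono) auto
    then have "N \<le> (N/2)^2" by (simp add: power2_eq_square field_simps)
    then have "N ^ (2*n) \<le> ((N/2)^2) ^ (2*n)" using N by (intro power_mono) auto
    also have "\<dots> = (N/2) ^ (4*n)" by (simp add: power_mult[symmetric])
    also have "\<dots> < (N/2) ^ (4*n+1)" using N by (intro power_strict_increasing) auto
    finally show ?thesis .
  qed
  ultimately show False using A by linarith
qed

text \<open>A prime tuple is determined, up to a choice in a set of size card I per coordinate,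
  by the product of its prime powers: every coordinate divides the product, hence is one of
  the primes of any other tuple with the same product.\<close>
lemma card_prime_tuple_fibre_le:
  fixes P I :: "nat set" and r :: "nat \<Rightarrow> nat" and v :: nat
  assumes finI: "finite I" and P: "\<forall>p\<in>P. prime p" and r: "\<forall>i\<in>I. 0 < r i"
  shows "card {t \<in> PiE I (\<lambda>_. P). (\<Prod>i\<in>I. t i ^ r i) = v} \<le> card I ^ card I"
proof (cases "{t \<in> PiE I (\<lambda>_. P). (\<Prod>i\<in>I. t i ^ r i) = v} = {}")
  case True
  then show ?thesis by (simp only: card.empty zero_le)
next
  case False
  then obtain t0 where t0: "t0 \<in> PiE I (\<lambda>_. P)" "(\<Prod>i\<in>I. t0 i ^ r i) = v" by auto
  have sub: "{t \<in> PiE I (\<lambda>_. P). (\<Prod>i\<in>I. t i ^ r i) = v} \<subseteq> PiE I (\<lambda>_. t0 ` I)"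
  proof
    fix t assume t: "t \<in> {t \<in> PiE I (\<lambda>_. P). (\<Prod>i\<in>I. t i ^ r i) = v}"
    have "t i \<in> t0 ` I" if i: "i \<in> I" for i
    proof -
      have "t i dvd (\<Prod>k\<in>I. t0 k ^ r k)"
        using dvd_prod_powers[OF finI i, of r t] r i t t0 by auto
      moreover have "prime (t i)" using t i P by (auto simp: PiE_iff)
      moreover have "\<forall>k\<in>I. prime (t0 k)" using t0 P by (auto simp: PiE_iff)
      ultimately show ?thesis using prime_dvd_prod_powers[OF finI] by blast
    qed
    then show "t \<in> PiE I (\<lambda>_. t0 ` I)" using t by (auto simp: PiE_iff)
  qed
  have "card {t \<in> PiE I (\<lambda>_. P). (\<Prod>i\<in>I. t i ^ r i) = v} \<le> card (PiE I (\<lambda>_. t0 ` I))"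
    by (rule card_mono[OF _ sub]) (use finI in \<open>auto intro: finite_PiE\<close>)
  also have "\<dots> = card (t0 ` I) ^ card I" using finI by (simp add: card_PiE)
  also have "\<dots> \<le> card I ^ card I" by (rule power_mono) (auto intro: card_image_le[OF finI])
  finally show ?thesis .
qed

text \<open>Multiplicity of the map (l, u) \<mapsto> l * (product of prime powers of u): if all
  values are at most N^(2n), a fibre is determined by the prime coordinates of u, each a
  prime divisor \<ge> N/2 of the value h, of which there are at most 4n.\<close>
lemma card_factorisation_fibre_le:
  fixes N :: real and P I :: "nat set" and r :: "nat \<Rightarrow> nat" and L B n h :: nat
  assumes N: "N \<ge> 4" and finI: "finite I" and finP: "finite P"
    and P: "\<forall>p\<in>P. prime p \<and> N / 2 \<le> real p" and r: "\<forall>i\<in>I. 0 < r i"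
    and LB: "real L * real B \<le> N ^ (2*n)"
    and bounded: "\<forall>u\<in>PiE I (\<lambda>_. P). (\<Prod>i\<in>I. u i ^ r i) \<le> B"
  shows "card {p \<in> {1..L} \<times> PiE I (\<lambda>_. P). fst p * (\<Prod>i\<in>I. snd p i ^ r i) = h}
           \<le> (4*n) ^ card I"
proof -
  define y where "y u = (\<Prod>i\<in>I. u i ^ r i)" for u :: "nat \<Rightarrow> nat"
  let ?T = "{p \<in> {1..L} \<times> PiE I (\<lambda>_. P). fst p * y (snd p) = h}"
  have y_pos: "1 \<le> y u" if "u \<in> PiE I (\<lambda>_. P)" for u
    unfolding y_def using that P by (intro prod_ge_1 one_le_power) (auto simp: PiE_iff intro: prime_ge_Suc_0_nat)
  show ?thesis
  proof (cases "?T = {}")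
    case True
    then show ?thesis unfolding y_def by (simp only: card.empty zero_le)
  next
    case False
    then obtain l0 u0 where l0: "1 \<le> l0" "l0 \<le> L" and u0: "u0 \<in> PiE I (\<lambda>_. P)"
      and h: "h = l0 * y u0" by auto
    have "0 < h" using h l0 y_pos[OF u0] by simp
    moreover have "real h \<le> N ^ (2*n)"
    proof -
      have "h \<le> L * B" unfolding h using l0 u0 bounded by (intro mult_le_mono) (auto simp: y_def)
      then show ?thesis using LB by (metis of_nat_le_iff of_nat_mult order.trans)
    qed
    ultimately have card_D: "card {p\<in>P. p dvd h} \<le> 4 * n"
      by (intro card_large_prime_divisors_le[OF N]) (use finP P in auto)
    have inj: "inj_on snd ?T"
    proof (rule inj_onI)
      fix p p' assume p: "p \<in> ?T" and p': "p' \<in> ?T" and eq: "snd p = snd p'"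
      then have "fst p * y (snd p) = fst p' * y (snd p)" and "y (snd p) \<ge> 1"
        using y_pos by auto
      then show "p = p'" using eq by (simp add: prod_eq_iff)
    qed
    have sub: "snd ` ?T \<subseteq> PiE I (\<lambda>_. {p\<in>P. p dvd h})"
    proof
      fix u assume "u \<in> snd ` ?T"
      then obtain p where "p \<in> ?T" "u = snd p" by blast
      then have u: "u \<in> PiE I (\<lambda>_. P)" and hl: "fst p * y u = h" by auto
      have "u i dvd h" if i: "i \<in> I" for i
      proof -
        have "u i dvd y u" unfolding y_def by (rule dvd_prod_powers) (use finI i r in auto)
        also have "y u dvd h" using hl by (metis dvd_triv_right)
        finally show ?thesis .
      qed
      then show "u \<in> PiE I (\<lambda>_. {p\<in>P. p dvd h})" using u by (auto simp: PiE_iff)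
    qed
    have "card ?T = card (snd ` ?T)" using card_image[OF inj] by simp
    also have "\<dots> \<le> card (PiE I (\<lambda>_. {p\<in>P. p dvd h}))"
      by (rule card_mono[OF _ sub]) (use finP finI in \<open>auto intro!: finite_PiE\<close>)
    also have "\<dots> = card {p\<in>P. p dvd h} ^ card I" using finI by (simp add: card_PiE)
    also have "\<dots> \<le> (4*n) ^ card I" using card_D by (rule power_mono) simp
    finally show ?thesis unfolding y_def .
  qed
qed

lemma PiE_split_bij:
  fixes A :: "'b set" and j m :: nat
  assumes "j \<le> m"
  shows "bij_betw (\<lambda>p. (\<lambda>i. if i < j then fst p i else snd p i))
           (PiE {..<j} (\<lambda>_. A) \<times> PiE {j..<m} (\<lambda>_. A)) (PiE {..<m} (\<lambda>_. A))"
proof (rule bij_betwI[where g = "\<lambda>f. (restrict f {..<j}, restrict f {j..<m})"])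
  show "(\<lambda>p. (\<lambda>i. if i < j then fst p i else snd p i)) \<in> PiE {..<j} (\<lambda>_. A) \<times> PiE {j..<m} (\<lambda>_. A) \<rightarrow> PiE {..<m} (\<lambda>_. A)"
    using assms by (auto simp: PiE_iff extensional_def)
  show "(\<lambda>f. (restrict f {..<j}, restrict f {j..<m})) \<in> PiE {..<m} (\<lambda>_. A) \<rightarrow> PiE {..<j} (\<lambda>_. A) \<times> PiE {j..<m} (\<lambda>_. A)"
    using assms by (auto simp: PiE_iff)
  fix p assume p: "p \<in> PiE {..<j} (\<lambda>_. A) \<times> PiE {j..<m} (\<lambda>_. A)"
  obtain t u where pe: "p = (t, u)" by (cases p)
  have t: "t \<in> PiE {..<j} (\<lambda>_. A)" and u: "u \<in> PiE {j..<m} (\<lambda>_. A)" using p pe by auto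
  have "restrict (\<lambda>i. if i < j then t i else u i) {..<j} = t"
    using t by (auto simp: restrict_def PiE_iff extensional_def)
  moreover have "restrict (\<lambda>i. if i < j then t i else u i) {j..<m} = u"
    using u by (auto simp: restrict_def PiE_iff extensional_def)
  ultimately show "(restrict (\<lambda>i. if i < j then fst p i else snd p i) {..<j}, restrict (\<lambda>i. if i < j then fst p i else snd p i) {j..<m}) = p"
    unfolding pe fst_conv snd_conv by simp
next
  fix f assume f: "f \<in> PiE {..<m} (\<lambda>_. A)"
  show "(\<lambda>i. if i < j then fst (restrict f {..<j}, restrict f {j..<m}) i else snd (restrict f {..<j}, restrict f {j..<m}) i) = f"
  proof
    fix i show "(if i < j then fst (restrict f {..<j}, restrict f {j..<m}) i else snd (restrict f {..<j}, restrict f {j..<m}) i) = f i"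
      using f assms by (auto simp: restrict_def PiE_iff extensional_def)
  qed
qed

lemma card_le_sum_positive:
  fixes r :: "nat \<Rightarrow> nat"
  assumes "\<forall>i<m. 0 < r i"
  shows "m \<le> (\<Sum>i<m. r i)"
proof -
  have "(\<Sum>i<m. 1::nat) \<le> (\<Sum>i<m. r i)" using assms by (intro sum_mono) auto
  then show ?thesis by simp
qed

lemma sum_PiE_split:
  fixes A :: "nat set" and g :: "nat \<Rightarrow> 'c::comm_monoid_add" and r :: "nat \<Rightarrow> nat"
  assumes jm: "j \<le> m"
  shows "(\<Sum>qs\<in>PiE {..<m} (\<lambda>_. A). g (\<Prod>i<m. qs i ^ r i))
       = (\<Sum>p\<in>PiE {..<j} (\<lambda>_. A) \<times> PiE {j..<m} (\<lambda>_. A).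
            g ((\<Prod>i<j. fst p i ^ r i) * (\<Prod>i\<in>{j..<m}. snd p i ^ r i)))"
proof -
  have split: "{..<m} = {..<j} \<union> {j..<m}" using jm by auto
  have merge: "(\<Prod>i<m. (if i < j then t i else u i) ^ r i)
      = (\<Prod>i<j. t i ^ r i) * (\<Prod>i\<in>{j..<m}. u i ^ r i)" for t u :: "nat \<Rightarrow> nat"
    unfolding split by (subst prod.union_disjoint) (auto intro!: arg_cong2[where f = "(*)"] prod.cong)
  show ?thesis
    by (subst sum.reindex_bij_betw[OF PiE_split_bij[OF jm], symmetric]) (simp add: merge)
qed

text \<open>Choice of the split index: the least j whose partial exponent sum reaches m - k.
  Minimality forces the partial sum to be 0 or at most n - k.\<close>
lemma exists_split_index:
  fixes r :: "nat \<Rightarrow> nat" and m n k :: nat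
  assumes r: "\<forall>i<m. 0 < r i" and rs: "(\<Sum>i<m. r i) = n"
  obtains j where "j \<le> m" "m - k \<le> (\<Sum>i<j. r i)"
    "(\<Sum>i<j. r i) = 0 \<or> (\<Sum>i<j. r i) + k \<le> n"
proof -
  define S where "S j = (\<Sum>i<j. r i)" for j
  have "m \<le> n" using card_le_sum_positive[OF r] rs by simp
  then have ex: "m - k \<le> S m" unfolding S_def using rs by simp
  define j where "j = (LEAST j. m - k \<le> S j)"
  have j_reach: "m - k \<le> S j" unfolding j_def by (rule LeastI[of _ m]) (rule ex)
  have jm: "j \<le> m" unfolding j_def by (rule Least_le) (rule ex)
  have "S j = 0 \<or> S j + k \<le> n"
  proof (cases j)
    case 0
    then show ?thesis unfolding S_def by simp
  next
    case (Suc j')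
    have below: "\<not> m - k \<le> S j'" unfolding j_def
      by (rule not_less_Least) (use Suc in \<open>simp add: j_def\<close>)
    have "r j' + (m - 1) \<le> n"
    proof -
      have "j' < m" using Suc jm by simp
      then have "(\<Sum>i<m. r i) = r j' + (\<Sum>i\<in>{..<m} - {j'}. r i)"
        by (subst sum.remove[of _ j']) auto
      moreover have "(\<Sum>i\<in>{..<m} - {j'}. (1::nat)) \<le> (\<Sum>i\<in>{..<m} - {j'}. r i)"
        using r by (intro sum_mono) auto
      moreover have "(\<Sum>i\<in>{..<m} - {j'}. (1::nat)) = m - 1" using \<open>j' < m\<close> by simp
      ultimately show ?thesis using rs by linarith
    qed
    moreover have "S j = S j' + r j'" unfolding S_def Suc by simp
    ultimately show ?thesis using below by linarith
  qed
  then show ?thesis using that jm j_reach unfolding S_def by blast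
qed

text \<open>The bilinear bound applied to the split of a prime-tuple sum at index j, with primes
  in [N/2, Nf]: the first j coordinates give x-values at most Nf^s of multiplicity at most
  j^j, the others give y-values at most Nf^(n-s) with the multiplicity bound above.\<close>
lemma prime_tuple_sum_split_bound:
  fixes P :: "nat set" and N :: real and Nf L j m n s :: nat and r :: "nat \<Rightarrow> nat" and a q :: int
  assumes N: "N \<ge> 4" and NfN: "real Nf \<le> N" and LN: "real L \<le> N ^ n"
    and P: "\<forall>p\<in>P. prime p \<and> N / 2 \<le> real p \<and> p \<le> Nf"
    and q: "q \<ge> 1" and cop: "coprime a q"
    and jm: "j \<le> m" and r: "\<forall>i<m. 0 < r i" and rs: "(\<Sum>i<m. r i) = n" and s: "s = (\<Sum>i<j. r i)"
  shows "(\<Sum>l=1..L. norm (\<Sum>qs\<in>PiE {..<m} (\<lambda>_. P).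
            e (real l * real (\<Prod>i<m. qs i ^ r i) * real_of_int a / real_of_int q)))^2
     \<le> real L * real (card P ^ (m - j)) * real ((4*n) ^ (m - j))
         * (real (L * Nf ^ (n - s)) + real_of_int q)
         * (real (card P ^ j) * real (j ^ j) * (real (Nf ^ s) / real_of_int q + 1))"
proof -
  define X where "X = PiE {..<j} (\<lambda>_. P)"
  define Y where "Y = PiE {j..<m} (\<lambda>_. P)"
  define x where "x t = (\<Prod>i<j. t i ^ r i)" for t :: "nat \<Rightarrow> nat"
  define y where "y u = (\<Prod>i\<in>{j..<m}. u i ^ r i)" for u :: "nat \<Rightarrow> nat"
  have finP: "finite P" using P by (intro finite_subset[of P "{..Nf}"]) auto
  have sum_Y: "(\<Sum>i\<in>{j..<m}. r i) = n - s"
  proof -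
    have split: "{..<m} = {..<j} \<union> {j..<m}" using jm by auto
    have "(\<Sum>i<m. r i) = (\<Sum>i<j. r i) + (\<Sum>i\<in>{j..<m}. r i)"
      unfolding split by (rule sum.union_disjoint) auto
    then show ?thesis using rs s by simp
  qed
  have tuple_le: "(\<Prod>i\<in>I. t i ^ r i) \<le> Nf ^ (\<Sum>i\<in>I. r i)" if "t \<in> PiE I (\<lambda>_. P)" for t I
    using that P by (auto simp: power_sum PiE_iff intro!: prod_mono power_mono)
  have x_le: "\<forall>t\<in>X. x t \<le> Nf ^ s" unfolding X_def x_def s using tuple_le by blast
  have y_le: "\<forall>u\<in>Y. y u \<le> Nf ^ (n - s)" unfolding Y_def y_def sum_Y[symmetric] using tuple_le by blast
  have y_ge: "\<forall>u\<in>Y. 1 \<le> y u"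
    unfolding Y_def y_def using P prime_ge_1_nat by (force intro!: prod_ge_1 one_le_power simp: PiE_iff)
  have fibre_x: "\<forall>v. card {t\<in>X. x t = v} \<le> j ^ j"
    using card_prime_tuple_fibre_le[of "{..<j}" P r] P r jm unfolding X_def x_def by auto
  have LB: "real L * real (Nf ^ (n - s)) \<le> N ^ (2*n)"
  proof -
    have "real (Nf ^ (n - s)) \<le> N ^ (n - s)" using NfN by (simp add: power_mono)
    also have "\<dots> \<le> N ^ n" using N by (intro power_increasing) auto
    finally have "real L * real (Nf ^ (n - s)) \<le> N ^ n * N ^ n" using LN by (intro mult_mono) auto
    then show ?thesis by (simp add: mult_2 power_add)
  qed
  have fibre_y: "\<forall>h. card {p \<in> {1..L} \<times> Y. fst p * y (snd p) = h} \<le> (4*n) ^ (m - j)"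
    using card_factorisation_fibre_le[OF N _ finP _ _ LB, of "{j..<m}" r] P r y_le
    unfolding Y_def y_def by auto
  have reindex: "(\<Sum>l=1..L. norm (\<Sum>qs\<in>PiE {..<m} (\<lambda>_. P).
            e (real l * real (\<Prod>i<m. qs i ^ r i) * real_of_int a / real_of_int q)))
      = (\<Sum>l=1..L. norm (\<Sum>p\<in>X\<times>Y. e (real l * real (x (fst p) * y (snd p)) * real_of_int a / real_of_int q)))"
    unfolding X_def Y_def x_def y_def
    by (intro sum.cong refl arg_cong[where f = norm] sum_PiE_split[OF jm])
  have card_X: "card X = card P ^ j" and card_Y: "card Y = card P ^ (m - j)"
    unfolding X_def Y_def by (simp_all add: card_PiE)
  have "(\<Sum>l=1..L. norm (\<Sum>p\<in>X\<times>Y. e (real l * real (x (fst p) * y (snd p)) * real_of_int a / real_of_int q)))^2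
      \<le> real L * real (card Y) * real ((4*n) ^ (m - j))
         * (real (L * Nf ^ (n - s)) + real_of_int q)
         * (real (card X) * real (j ^ j) * (real (Nf ^ s) / real_of_int q + 1))"
    by (rule bilinear_exp_sum_bound) (use finP q cop x_le y_le y_ge fibre_x fibre_y in
        \<open>auto simp: X_def Y_def intro: finite_PiE\<close>)
  then show ?thesis unfolding reindex card_X card_Y .
qed

lemma dominant_terms_bound:
  fixes N L q :: real and m n s k :: nat
  assumes N: "N \<ge> 1" and L: "L \<ge> 1" and q: "q \<ge> 1" and qL: "q \<le> L * N ^ k"
    and mn: "m \<le> n" and sn: "s \<le> n" and ms: "m \<le> s + k" and cs: "s = 0 \<or> s + k \<le> n"
  shows "L * N ^ m * (L * N ^ (n - s) + q) * (N ^ s / q + 1)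
     \<le> 4 * max (L^2 * N ^ (n + k)) (L^2 * N ^ (2*n) / q)"
proof -
  define M where "M = max (L^2 * N ^ (n + k)) (L^2 * N ^ (2*n) / q)"
  have M1: "L^2 * N ^ (n + k) \<le> M" and M2: "L^2 * N ^ (2*n) / q \<le> M" unfolding M_def by auto
  have pw: "\<And>a b. a \<le> b \<Longrightarrow> N ^ a \<le> N ^ b" using N by (intro power_increasing) auto
  have e: "L * N ^ m * (L * N ^ (n - s) + q) * (N ^ s / q + 1)
      = L^2 * N^(m + n) / q + L^2 * N^(m + (n - s)) + L * N^(m + s) + L * N^m * q"
  proof -
    have "N ^ (n - s) * N ^ s = N ^ n" using sn by (simp flip: power_add)
    then show ?thesis using q by (simp add: field_simps power2_eq_square power_add)
  qed
  have t1: "L^2 * N^(m + n) / q \<le> M"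
  proof -
    have "L^2 * N^(m + n) / q \<le> L^2 * N^(2*n) / q"
      using q mn by (intro divide_right_mono mult_left_mono pw) auto
    then show ?thesis using M2 by linarith
  qed
  have t2: "L^2 * N^(m + (n - s)) \<le> M"
  proof -
    have "L^2 * N^(m + (n - s)) \<le> L^2 * N^(n + k)" using ms sn by (intro mult_left_mono pw) auto
    then show ?thesis using M1 by linarith
  qed
  have t3: "L * N^(m + s) \<le> M"
    using cs
  proof
    assume "s = 0"
    have "L * N^(m + s) \<le> L^2 * N^(n + k)"
    proof -
      have "L * N^(m+s) \<le> L * N^(n+k)" using \<open>s = 0\<close> mn L by (intro mult_left_mono pw) auto
      also have "\<dots> \<le> L^2 * N^(n+k)" using L N by (intro mult_right_mono) (auto simp: power2_eq_square)
      finally show ?thesis .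
    qed
    then show ?thesis using M1 by linarith
  next
    assume sk: "s + k \<le> n"
    have "L * N^(m + s) * q \<le> L * N^(m+s) * (L * N^k)" using qL L N by (intro mult_left_mono) auto
    also have "\<dots> = L^2 * N^(m+s+k)" by (simp add: power_add power2_eq_square)
    also have "\<dots> \<le> L^2 * N^(2*n)" using sk mn by (intro mult_left_mono pw) auto
    finally have "L * N^(m + s) \<le> L^2 * N^(2*n) / q" using q by (simp add: field_simps)
    then show ?thesis using M2 by linarith
  qed
  have t4: "L * N^m * q \<le> M"
  proof -
    have "L * N^m * q \<le> L * N^m * (L * N^k)" using qL L N by (intro mult_left_mono) auto
    also have "\<dots> = L^2 * N^(m+k)" by (simp add: power_add power2_eq_square)
    also have "\<dots> \<le> L^2 * N^(n+k)" using mn by (intro mult_left_mono pw) auto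
    finally show ?thesis using M1 by linarith
  qed
  show ?thesis unfolding e M_def[symmetric] using t1 t2 t3 t4 by linarith
qed

text \<open>The split bound in terms of N: the numbers of prime tuples are at most N^m, the
  multiplicities at most (4n)^n, and the remaining factor is controlled by the estimate
  above with the partial exponent sum s of the chosen split.\<close>
lemma split_bound_le_dominant:
  fixes N :: real and cP Nf L j m n s k :: nat and q :: int
  assumes N: "N \<ge> 1" and cP: "real cP \<le> N" and NfN: "real Nf \<le> N" and L: "L > 0"
    and q: "q \<ge> 1" and qLN: "real_of_int q \<le> real L * N ^ k"
    and jm: "j \<le> m" and mn: "m \<le> n" and sn: "s \<le> n" and ms: "m - k \<le> s"
    and cs: "s = 0 \<or> s + k \<le> n"
  shows "real L * real (cP ^ (m - j)) * real ((4*n) ^ (m - j)) * (real (L * Nf ^ (n - s)) + real_of_int q)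
         * (real (cP ^ j) * real (j ^ j) * (real (Nf ^ s) / real_of_int q + 1))
     \<le> 4 ^ n * real n ^ n * (4 * max ((real L)^2 * N ^ (n + k)) ((real L)^2 * N ^ (2*n) / real_of_int q))"
proof -
  have q1: "real_of_int q \<ge> 1" using q by simp
  have tuples: "real (cP ^ j) * real (cP ^ (m - j)) \<le> N ^ m"
  proof -
    have "real (cP ^ j) * real (cP ^ (m - j)) = real cP ^ m" using jm by (simp flip: power_add)
    also have "\<dots> \<le> N ^ m" using cP by (intro power_mono) auto
    finally show ?thesis .
  qed
  have mult: "real ((4*n) ^ (m - j)) * real (j ^ j) \<le> 4 ^ n * real n ^ n"
  proof -
    have "(4*n) ^ (m - j) * j ^ j \<le> (4*n) ^ (m - j) * (4*n) ^ j"
      using jm mn by (intro mult_left_mono power_mono) auto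
    also have "\<dots> = (4*n) ^ m" using jm by (metis le_add_diff_inverse2 power_add)
    also have "\<dots> \<le> (4*n) ^ n"
      using mn by (cases "n = 0") (simp, intro power_increasing, auto)
    finally show ?thesis by (metis of_nat_le_iff of_nat_mult of_nat_power of_nat_numeral power_mult_distrib)
  qed
  have rest: "real L * ((real (L * Nf ^ (n - s)) + real_of_int q) * (real (Nf ^ s) / real_of_int q + 1))
      \<le> real L * ((real L * N ^ (n - s) + real_of_int q) * (N ^ s / real_of_int q + 1))"
  proof -
    have "real (Nf ^ (n - s)) \<le> N ^ (n - s)" "real (Nf ^ s) \<le> N ^ s"
      using NfN by (simp_all add: power_mono)
    then have "real (L * Nf ^ (n - s)) + real_of_int q \<le> real L * N ^ (n - s) + real_of_int q"
      and "real (Nf ^ s) / real_of_int q + 1 \<le> N ^ s / real_of_int q + 1"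
      using q1 by (simp_all add: mult_left_mono divide_right_mono)
    then show ?thesis using q1 N by (intro mult_left_mono mult_mono) auto
  qed
  have "real L * real (cP ^ (m - j)) * real ((4*n) ^ (m - j)) * (real (L * Nf ^ (n - s)) + real_of_int q)
         * (real (cP ^ j) * real (j ^ j) * (real (Nf ^ s) / real_of_int q + 1))
      = (real ((4*n) ^ (m - j)) * real (j ^ j)) * ((real (cP ^ j) * real (cP ^ (m - j))) * (real L *
          ((real (L * Nf ^ (n - s)) + real_of_int q) * (real (Nf ^ s) / real_of_int q + 1))))"
    by (simp add: mult_ac)
  also have "\<dots> \<le> (4 ^ n * real n ^ n) * (N ^ m * (real L *
          ((real L * N ^ (n - s) + real_of_int q) * (N ^ s / real_of_int q + 1))))"
    by (rule mult_mono[OF mult mult_mono[OF tuples rest]]) (use N q1 in auto)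
  also have "\<dots> = (4 ^ n * real n ^ n) * (real L * N ^ m * (real L * N ^ (n - s) + real_of_int q) * (N ^ s / real_of_int q + 1))"
    by (simp add: mult_ac)
  also have "\<dots> \<le> (4 ^ n * real n ^ n) * (4 * max ((real L)^2 * N ^ (n + k)) ((real L)^2 * N ^ (2*n) / real_of_int q))"
    using N L q1 qLN mn sn ms cs by (intro mult_left_mono dominant_terms_bound) auto
  finally show ?thesis .
qed

lemma prime_tuple_sum_square_bound:
  fixes a q :: int and n k L m :: nat and N :: real and r :: "nat \<Rightarrow> nat"
  assumes q: "q \<ge> 1" and cop: "coprime a q" and n: "n > 0" and L: "L > 0"
    and LN: "real L \<le> N ^ n" and qLN: "real_of_int q \<le> real L * N ^ k" and N2: "2 ^ (n + k + 1) < N"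
    and r: "\<forall>i<m. 0 < r i" and rs: "(\<Sum>i<m. r i) = n"
  defines "P \<equiv> {p::nat. prime p \<and> N / 2 \<le> real p \<and> real p \<le> N \<and> \<not> int p dvd q}"
  shows "(\<Sum>l = 1..L. norm (\<Sum>qs \<in> PiE {..<m} (\<lambda>_. P).
            e (real l * real (\<Prod>i<m. qs i ^ r i) * real_of_int a / real_of_int q)))^2
     \<le> 4 ^ n * real n ^ n * (4 * max ((real L)^2 * N ^ (n + k)) ((real L)^2 * N ^ (2*n) / real_of_int q))"
proof -
  have N4: "N \<ge> 4"
  proof -
    have "(2::real) ^ 2 \<le> 2 ^ (n + k + 1)" using n by (intro power_increasing) auto
    then show ?thesis using N2 by simp
  qed
  define Nf where "Nf = nat \<lfloor>N\<rfloor>"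
  have NfN: "real Nf \<le> N" unfolding Nf_def using N4 by simp
  have P_props: "\<forall>p\<in>P. prime p \<and> N / 2 \<le> real p \<and> p \<le> Nf"
    unfolding P_def Nf_def by (auto simp: le_nat_floor)
  have "P \<subseteq> {1..Nf}" unfolding P_def Nf_def by (auto simp: le_nat_floor prime_ge_Suc_0_nat)
  then have "card P \<le> Nf" using card_mono[of "{1..Nf}" P] by simp
  then have card_P: "real (card P) \<le> N" using NfN by linarith
  have mn: "m \<le> n" using card_le_sum_positive[OF r] rs by simp
  obtain j where jm: "j \<le> m" and reach: "m - k \<le> (\<Sum>i<j. r i)"
    and balance: "(\<Sum>i<j. r i) = 0 \<or> (\<Sum>i<j. r i) + k \<le> n"
    using exists_split_index[OF r rs] by blast
  define s where "s = (\<Sum>i<j. r i)"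
  have sn: "s \<le> n" unfolding s_def rs[symmetric] using jm by (intro sum_mono2) auto
  show ?thesis
    by (rule order.trans[OF prime_tuple_sum_split_bound[OF N4 NfN LN P_props q cop jm r rs s_def]
          split_bound_le_dominant])
       (use N4 card_P NfN L q qLN jm mn sn reach balance in \<open>auto simp: s_def\<close>)
qed

text \<open>Taking square roots: the squared bound yields the theorem's bound with constant 2
  (the factor n^n, which only needs its square root, is kept in full).\<close>
lemma bound_from_square:
  fixes L N q lhs :: real and n k :: nat
  assumes N: "N \<ge> 1" and L: "L \<ge> 0" and q: "q \<ge> 1" and n: "n \<ge> 1"
    and lhs0: "lhs \<ge> 0"
    and h: "lhs ^ 2 \<le> 4 ^ n * real n ^ n * (4 * max (L^2 * N ^ (n + k)) (L^2 * N ^ (2*n) / q))"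
  shows "lhs \<le> 2 * 2 ^ (n + k) * real n ^ n *
            max (L * N powr (real n / 2 + real k / 2)) (L * N ^ n / sqrt q)"
proof -
  define A where "A = L * N powr (real n / 2 + real k / 2)"
  define B where "B = L * N ^ n / sqrt q"
  define mx where "mx = max A B"
  have A0: "A \<ge> 0" unfolding A_def using L by simp
  have B0: "B \<ge> 0" unfolding B_def using L N q by simp
  have A2: "A^2 = L^2 * N ^ (n + k)"
  proof -
    have "(N powr (real n / 2 + real k / 2))^2 = N powr (real (n + k))"
      using N by (simp add: powr_power algebra_simps)
    also have "\<dots> = N ^ (n + k)" by (rule powr_realpow) (use N in simp)
    finally show ?thesis unfolding A_def by (simp add: power_mult_distrib)
  qed
  have B2: "B^2 = L^2 * N ^ (2*n) / q"
    unfolding B_def using q by (simp add: power_mult_distrib power_divide power_mult[symmetric] mult.commute)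
  have mx0: "mx \<ge> 0" unfolding mx_def using A0 by simp
  have M: "max (L^2 * N ^ (n + k)) (L^2 * N ^ (2*n) / q) \<le> mx^2"
  proof -
    have "A^2 \<le> mx^2" unfolding mx_def using A0 by (intro power_mono) auto
    moreover have "B^2 \<le> mx^2" unfolding mx_def using B0 by (intro power_mono) auto
    ultimately show ?thesis using A2 B2 by simp
  qed
  have "lhs ^ 2 \<le> 4 ^ n * real n ^ n * (4 * mx^2)"
    using h M by (rule order.trans[OF _ mult_left_mono[OF mult_left_mono]]) auto
  also have "\<dots> \<le> 4 ^ (n + k) * (real n ^ n * real n ^ n) * (4 * mx^2)"
  proof (rule mult_right_mono[OF mult_mono])
    show "(4::real) ^ n \<le> 4 ^ (n + k)" by (intro power_increasing) auto
    show "real n ^ n \<le> real n ^ n * real n ^ n"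
    proof -
      have "1 \<le> real n ^ n" using n by simp
      then show ?thesis by (metis mult_cancel_left2 mult_left_mono of_nat_0_le_iff zero_le_power)
    qed
  qed (use mx0 in auto)
  also have "\<dots> = (2 * 2 ^ (n + k) * real n ^ n * mx)^2"
  proof -
    have f4: "(4::real) ^ (n + k) = 2 ^ (n + k) * 2 ^ (n + k)"
      by (simp flip: power_mult_distrib)
    show ?thesis by (simp add: f4 power_mult_distrib mult_ac power2_eq_square)
  qed
  finally have "lhs^2 \<le> (2 * 2 ^ (n + k) * real n ^ n * mx)^2" .
  then show ?thesis unfolding mx_def A_def B_def
    by (rule power2_le_imp_le) (use mx0 in \<open>simp add: mx_def A_def B_def\<close>)
qed

theorem lemma2:
  "\<exists>C::real. C > 0 \<and>
    (\<forall>(a::int) (q::int) (n::nat) (k::nat) (L::nat) (N::real) (m::nat) (r::nat \<Rightarrow> nat).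
      q \<ge> 1 \<longrightarrow> gcd a q = 1 \<longrightarrow>
      n > 0 \<longrightarrow> k > 0 \<longrightarrow> L > 0 \<longrightarrow> N \<ge> 1 \<longrightarrow>
      real L \<le> N ^ n \<longrightarrow> real_of_int q \<le> real L * N ^ k \<longrightarrow>
      2 ^ (n + k + 1) < N \<longrightarrow>
      0 < m \<longrightarrow> m \<le> n \<longrightarrow> (\<forall>i<m. 0 < r i) \<longrightarrow> (\<Sum>i<m. r i) = n \<longrightarrow>
      (let P = {p::nat. prime p \<and> N / 2 \<le> real p \<and> real p \<le> N \<and> \<not> int p dvd q} in
        (\<Sum>l = 1..L. norm (\<Sum>qs \<in> PiE {..<m} (\<lambda>_. P).
            e (real l * real (\<Prod>i<m. qs i ^ r i) * real_of_int a / real_of_int q)))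
        \<le> C * 2 ^ (n + k) * real n ^ n *
            max (real L * N powr (real n / 2 + real k / 2))
                (real L * N ^ n / sqrt (real_of_int q))))"
proof (intro exI[of _ 2] conjI allI impI)
  fix a q :: int and n k L m :: nat and N :: real and r :: "nat \<Rightarrow> nat"
  assume q: "q \<ge> 1" and gcd: "gcd a q = 1" and n: "n > 0" and "k > 0" and L: "L > 0"
    and N: "N \<ge> 1" and LN: "real L \<le> N ^ n" and qLN: "real_of_int q \<le> real L * N ^ k"
    and N2: "2 ^ (n + k + 1) < N" and "0 < m" "m \<le> n"
    and r: "\<forall>i<m. 0 < r i" and rs: "(\<Sum>i<m. r i) = n"
  have cop: "coprime a q" using gcd by (simp add: coprime_iff_gcd_eq_1)
  show "let P = {p::nat. prime p \<and> N / 2 \<le> real p \<and> real p \<le> N \<and> \<not> int p dvd q} in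
        (\<Sum>l = 1..L. norm (\<Sum>qs \<in> PiE {..<m} (\<lambda>_. P).
            e (real l * real (\<Prod>i<m. qs i ^ r i) * real_of_int a / real_of_int q)))
        \<le> 2 * 2 ^ (n + k) * real n ^ n *
            max (real L * N powr (real n / 2 + real k / 2))
                (real L * N ^ n / sqrt (real_of_int q))"
    unfolding Let_def
    by (rule bound_from_square[OF _ _ _ _ _
          prime_tuple_sum_square_bound[OF q cop n L LN qLN N2 r rs]])
       (use N q n in \<open>auto intro: sum_nonneg\<close>)
qed simp

end
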